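(* Let $\alpha>1$ and let $B\subset\mathbb{H}$ be nonempty with $\hat B:=B\setminus\{x\in\mathbb{H}: x_2\le|x_1|^{1/\alpha}\}$ finite. Define $h_0=\max_{x\in\hat B}x_2$ if $\hat B\neq\emptyset$, and $h_0=\min\{h\in\mathbb{Z}_{\ge0}:\ B\cap([-\lceil h^\alpha\rceil,\lceil h^\alpha\rceil]\times[0,h])\neq\emptyset\}$ if $\hat B=\emptyset$. Let $l_{h_0}=\{(i,h_0):\ |i|\le\lfloor h_0^\alpha\rfloor\}$. Then there is a constant $c>0$ such that for all sufficiently large $N$, $$\sum_{w\in l_{h_0}}\bar{\mathcal H}_{B\cup l_{h_0},N}(w)\ge c.$$
   Context: $\mathbb{H}=\{(x_1,x_2)\in\mathbb{Z}^2:\ x_2\ge 0\}$ and $L_n=\{(x_1,n):x_1\in\mathbb{Z}\}$. $(S_n)_{n\ge0}$ is a simple random walk on $\mathbb{Z}^2$; $P_z$ denotes its law started at $z$. For $A\subset\mathbb{Z}^2$, $\bar\tau_A=\min\{n\ge0: S_n\in A\}$. For $A\subset\mathbb{H}$, $x\in A$ and $N\ge1$, define $$\bar{\mathcal H}_{A,N}(x)=\sum_{z\in L_N\setminus A}P_z\big(S_{\bar\tau_{A\cup L_0}}=x\big).$$ Integer intervals $[a,b]$ denote $\{a,a+1,\dots,b\}$. *)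

theory Defs
  imports "HOL-Analysis.Analysis"
begin

type_synonym pt = "int \<times> int"

definition UHP :: "pt set" where
  "UHP = {x. snd x \<ge> 0}"

definition line :: "int \<Rightarrow> pt set" where
  "line n = {x. snd x = n}"

definition SRW_steps :: "pt set" where
  "SRW_steps = {(1,0), (-1,0), (0,1), (0,-1)}"

definition walk_pos :: "pt \<Rightarrow> pt list \<Rightarrow> nat \<Rightarrow> pt" where
  "walk_pos z s k = z + sum_list (take k s)"

text \<open>P_z(S_{tau_A} = x), with tau_A = min{n \<ge> 0 : S_n \<in> A}: sum over all step
  sequences of length n (each of probability 4^-n) for which n is the first
  time the walk is in A and the walk is at x at that time.\<close>
definition hit_prob :: "pt set \<Rightarrow> pt \<Rightarrow> pt \<Rightarrow> real" where
  "hit_prob A z x =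
     (\<Sum>n. \<Sum>s\<in>{s. set s \<subseteq> SRW_steps \<and> length s = n}.
        if walk_pos z s n = x \<and> walk_pos z s n \<in> A \<and> (\<forall>k<n. walk_pos z s k \<notin> A)
        then (1/4::real) ^ n else 0)"

definition Hbar :: "pt set \<Rightarrow> nat \<Rightarrow> pt \<Rightarrow> real" where
  "Hbar A N x = infsum (\<lambda>z. hit_prob (A \<union> line 0) z x) (line (int N) - A)"

definition Bhat :: "real \<Rightarrow> pt set \<Rightarrow> pt set" where
  "Bhat \<alpha> B = B - {x \<in> UHP. real_of_int (snd x) \<le> \<bar>real_of_int (fst x)\<bar> powr (1/\<alpha>)}"

definition h0 :: "real \<Rightarrow> pt set \<Rightarrow> nat" where
  "h0 \<alpha> B = (if Bhat \<alpha> B \<noteq> {} then nat (Max (snd ` Bhat \<alpha> B))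
     else (LEAST h::nat. B \<inter> ({- \<lceil>real h powr \<alpha>\<rceil> .. \<lceil>real h powr \<alpha>\<rceil>} \<times> {0 .. int h}) \<noteq> {}))"

definition lseg :: "real \<Rightarrow> nat \<Rightarrow> pt set" where
  "lseg \<alpha> h = {(i, int h) | i. \<bar>i\<bar> \<le> \<lfloor>real h powr \<alpha>\<rfloor>}"

end

theory Submission
  imports Defs
begin

text \<open>
  By time reversal, Hbar A N x dominates the expected number of visits to L_N of the walk started at x
  and killed on hitting A \<union> L_0. From (0, h0) the walk climbs straight up to (0, m) with probability
  4^-(m - h0) inside D = {h0 < x2 < 2N, x2 > |x1|^(1/\<alpha>)}, a region avoiding B and l_h0. For
  1/\<alpha> < \<beta> < 1 the function g = C Re(w^\<beta>) - K / Re w, where w = x2 + S - i x1, is superharmonic,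
  nonnegative, and dominates x2 on the curve x2 = |x1|^(1/\<alpha>). Hence \<Phi> = min(x2, 2N - x2) - h0 - g
  is nonpositive on the boundary of D and subharmonic in D away from L_N. As g(0, m) = O(m^\<beta>), we
  have \<Phi>(0, m) \<ge> 1 for m large, and optional stopping at the exit from D gives at least one expected
  visit to L_N from (0, m), for every N > m. So c = 4^-(m - h0) works.
\<close>

section \<open>The walk killed outside a set\<close>

text \<open>(killed_step D ^^ n) f w is the expectation of f(S_n) over the walks from w that stay in D at
  times 1, ..., n.\<close>
definition killed_step :: "pt set \<Rightarrow> (pt \<Rightarrow> real) \<Rightarrow> pt \<Rightarrow> real" where
  "killed_step D f x = (\<Sum>e\<in>SRW_steps. if x + e \<in> D then f (x + e) else 0) / 4"

lemma sum_SRW_steps: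
  "(\<Sum>e\<in>SRW_steps. g e) = g (1,0) + g (-1,0) + g (0,1) + g (0,-1)"
  by (simp add: SRW_steps_def add_ac)

lemma killed_step_expand:
  "killed_step D f x =
     ((if x + (1,0) \<in> D then f (x + (1,0)) else 0) + (if x + (-1,0) \<in> D then f (x + (-1,0)) else 0)
    + (if x + (0,1) \<in> D then f (x + (0,1)) else 0) + (if x + (0,-1) \<in> D then f (x + (0,-1)) else 0)) / 4"
  unfolding killed_step_def sum_SRW_steps ..

lemma killed_step_linear:
  "killed_step D (\<lambda>y. a * f y + b * g y) x = a * killed_step D f x + b * killed_step D g x"
  by (simp add: killed_step_expand algebra_simps add_divide_distrib)

lemma killed_step_sum:
  "killed_step D (\<lambda>y. \<Sum>i\<in>I. f i y) x = (\<Sum>i\<in>I. killed_step D (f i) x)"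
proof -
  have "(if x + e \<in> D then \<Sum>i\<in>I. f i (x + e) else 0) = (\<Sum>i\<in>I. if x + e \<in> D then f i (x + e) else 0)"
    for e by simp
  then show ?thesis
    unfolding killed_step_def by (simp add: sum_divide_distrib[symmetric] sum.swap[of _ SRW_steps])
qed

lemma killed_steps_linear:
  "(killed_step D ^^ n) (\<lambda>y. a * f y + b * g y)
     = (\<lambda>x. a * (killed_step D ^^ n) f x + b * (killed_step D ^^ n) g x)"
  by (induction n) (simp_all add: killed_step_linear)

lemma killed_step_mono:
  assumes "\<And>y. y \<in> D \<Longrightarrow> f y \<le> g y"
  shows "killed_step D f x \<le> killed_step D g x"
  unfolding killed_step_def using assms by (intro divide_right_mono sum_mono) auto

lemma killed_steps_mono:
  assumes "\<And>y. y \<in> D \<Longrightarrow> f y \<le> g y" and "f x \<le> g x"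
  shows "(killed_step D ^^ n) f x \<le> (killed_step D ^^ n) g x"
  using assms(2)
proof (induction n arbitrary: x)
  case (Suc n)
  have "(killed_step D ^^ n) f y \<le> (killed_step D ^^ n) g y" if "y \<in> D" for y
    using Suc.IH assms(1) that by blast
  then show ?case by (simp add: killed_step_mono)
qed simp

lemma killed_steps_nonneg:
  assumes "\<And>y. y \<in> D \<Longrightarrow> 0 \<le> f y" and "0 \<le> f x"
  shows "0 \<le> (killed_step D ^^ n) f x"
proof -
  have "killed_step D (\<lambda>_. 0) = (\<lambda>_. 0)" by (simp add: killed_step_def fun_eq_iff)
  then have "(killed_step D ^^ n) (\<lambda>_. 0) = (\<lambda>_. 0)" by (induction n) simp_all
  then show ?thesis using killed_steps_mono[of D "\<lambda>_. 0" f x n] assms by simp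
qed

lemma killed_step_ge_single:
  assumes "e \<in> SRW_steps" and "x + e \<in> D" and "\<And>y. y \<in> D \<Longrightarrow> 0 \<le> f y"
  shows "f (x + e) / 4 \<le> killed_step D f x"
proof -
  have "f (x + e) \<le> (\<Sum>e\<in>SRW_steps. if x + e \<in> D then f (x + e) else 0)"
    using member_le_sum[of e SRW_steps "\<lambda>e. if x + e \<in> D then f (x + e) else 0"] assms
    by (simp add: SRW_steps_def)
  then show ?thesis by (simp add: killed_step_def divide_right_mono)
qed

lemma killed_step_le_average:
  assumes "\<And>y. 0 \<le> f y"
  shows "killed_step D f x \<le> (\<Sum>e\<in>SRW_steps. f (x + e)) / 4"
  unfolding killed_step_def using assms by (intro divide_right_mono sum_mono) auto

lemma killed_step_const_le: "0 \<le> c \<Longrightarrow> killed_step D (\<lambda>_. c) x \<le> c"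
  using killed_step_le_average[of "\<lambda>_. c" D x] by (simp add: SRW_steps_def)

lemma killed_steps_mono_domain:
  assumes "D' \<subseteq> D" and "\<And>y. 0 \<le> f y"
  shows "(killed_step D' ^^ n) f x \<le> (killed_step D ^^ n) f x"
proof (induction n arbitrary: x)
  case (Suc n)
  have "(if y \<in> D' then (killed_step D' ^^ n) f y else 0) \<le> (if y \<in> D then (killed_step D ^^ n) f y else 0)"
    for y using assms Suc.IH[of y] killed_steps_nonneg[of D f y n] by auto
  then show ?case unfolding funpow.simps comp_def killed_step_def
    by (intro divide_right_mono sum_mono) auto
qed simp

lemma killed_steps_telescope_ge:
  assumes step: "\<And>y. y \<in> D \<Longrightarrow> f y - c * g y \<le> killed_step D f y" and x: "x \<in> D"
  shows "f x - c * (\<Sum>n<M. (killed_step D ^^ n) g x) \<le> (killed_step D ^^ M) f x"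
proof (induction M)
  case (Suc M)
  have "(killed_step D ^^ M) (\<lambda>y. 1 * f y + (- c) * g y) x \<le> (killed_step D ^^ M) (killed_step D f) x"
    by (rule killed_steps_mono) (use step x in auto)
  then have "(killed_step D ^^ M) f x - c * (killed_step D ^^ M) g x \<le> (killed_step D ^^ Suc M) f x"
    by (simp only: killed_steps_linear funpow_Suc_right comp_def)
  with Suc show ?case by (simp add: distrib_left)
qed simp

lemma killed_steps_telescope_le:
  assumes step: "\<And>y. y \<in> D \<Longrightarrow> killed_step D f y \<le> f y - c * g y" and x: "x \<in> D"
  shows "(killed_step D ^^ M) f x \<le> f x - c * (\<Sum>n<M. (killed_step D ^^ n) g x)"
proof (induction M)
  case (Suc M)
  have "(killed_step D ^^ M) (killed_step D f) x \<le> (killed_step D ^^ M) (\<lambda>y. 1 * f y + (- c) * g y) x"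
    by (rule killed_steps_mono) (use step x in auto)
  then have "(killed_step D ^^ Suc M) f x \<le> (killed_step D ^^ M) f x - c * (killed_step D ^^ M) g x"
    by (simp only: killed_steps_linear funpow_Suc_right comp_def)
  with Suc show ?case by (simp add: distrib_left)
qed simp

definition l1_dist :: "pt \<Rightarrow> pt \<Rightarrow> int" where
  "l1_dist x y = \<bar>fst x - fst y\<bar> + \<bar>snd x - snd y\<bar>"

lemma l1_dist_step: "e \<in> SRW_steps \<Longrightarrow> l1_dist x (x + e) = 1"
  by (auto simp: SRW_steps_def l1_dist_def)

lemma killed_steps_local:
  assumes "\<And>y. y \<in> insert x D \<Longrightarrow> l1_dist x y \<le> int n \<Longrightarrow> f y = g y"
  shows "(killed_step D ^^ n) f x = (killed_step D ^^ n) g x"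
  using assms
proof (induction n arbitrary: x)
  case 0
  then show ?case by (simp add: l1_dist_def)
next
  case (Suc n)
  have "(killed_step D ^^ n) f (x + e) = (killed_step D ^^ n) g (x + e)"
    if e: "e \<in> SRW_steps" "x + e \<in> D" for e
  proof (rule Suc.IH)
    fix y assume y: "y \<in> insert (x + e) D" "l1_dist (x + e) y \<le> int n"
    have "l1_dist x y \<le> l1_dist x (x + e) + l1_dist (x + e) y" by (simp add: l1_dist_def)
    then show "f y = g y" using y e l1_dist_step[OF e(1), of x] by (intro Suc.prems) auto
  qed
  then have "killed_step D ((killed_step D ^^ n) f) x = killed_step D ((killed_step D ^^ n) g) x"
    unfolding killed_step_def by (intro arg_cong[where f = "\<lambda>s. s / 4"] sum.cong) auto
  then show ?case by simp
qed

lemma killed_steps_ge_vertical_path: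
  assumes f: "\<And>y. y \<in> D \<Longrightarrow> 0 \<le> f y" and path: "\<And>i. 1 \<le> i \<Longrightarrow> i \<le> j \<Longrightarrow> x + (0, int i) \<in> D"
  shows "(1/4)^j * f (x + (0, int j)) \<le> (killed_step D ^^ j) f x"
  using path
proof (induction j arbitrary: x)
  case (Suc j)
  have up: "x + (0,1) \<in> D" using Suc.prems[of 1] by simp
  have "(1/4)^j * f (x + (0,1) + (0, int j)) \<le> (killed_step D ^^ j) f (x + (0,1))"
  proof (rule Suc.IH)
    fix i assume "1 \<le> i" "i \<le> j"
    then show "x + (0,1) + (0, int i) \<in> D" using Suc.prems[of "Suc i"] by (simp add: add.assoc)
  qed
  also have "\<dots> / 4 \<le> (killed_step D ^^ Suc j) f x"
    using killed_step_ge_single[of "(0,1)" x D "(killed_step D ^^ j) f"] up f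
    by (simp add: SRW_steps_def killed_steps_nonneg)
  finally show ?case by (simp add: add.assoc)
qed (simp add: zero_prod_def[symmetric])

lemma killed_steps_le_one: "(killed_step D ^^ n) (\<lambda>_. 1) x \<le> 1"
proof (induction n arbitrary: x)
  case (Suc n)
  have "(if y \<in> D then (killed_step D ^^ n) (\<lambda>_. 1) y else 0) \<le> 1" for y
    using Suc.IH by simp
  then have "killed_step D ((killed_step D ^^ n) (\<lambda>_. 1)) x \<le> (\<Sum>e\<in>SRW_steps. 1) / 4"
    unfolding killed_step_def by (intro divide_right_mono sum_mono) auto
  then show ?case by (simp add: SRW_steps_def)
qed simp

lemma killed_step_le_down:
  assumes "\<And>y. y \<in> D \<Longrightarrow> f y \<le> 1"
  shows "killed_step D f x \<le> (3 + (if x + (0,-1) \<in> D then f (x + (0,-1)) else 0)) / 4"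
proof -
  have "(if y \<in> D then f y else 0) \<le> 1" for y using assms by simp
  from this[of "x + (1,0)"] this[of "x + (-1,0)"] this[of "x + (0,1)"] show ?thesis
    unfolding killed_step_expand by (intro divide_right_mono) linarith+
qed

lemma killed_steps_exit_below:
  assumes D: "\<And>y. y \<in> D \<Longrightarrow> 1 \<le> snd y" and x: "snd x \<le> int n"
  shows "(killed_step D ^^ Suc n) (\<lambda>_. 1) x \<le> 1 - (1/4)^Suc n"
  using x
proof (induction n arbitrary: x)
  case 0
  have "x + (0,-1) \<notin> D" using D[of "x + (0,-1)"] 0 by (cases x) auto
  then show ?case using killed_step_le_down[of D "\<lambda>_. 1" x] by simp
next
  case (Suc n)
  have down: "(if x + (0,-1) \<in> D then (killed_step D ^^ Suc n) (\<lambda>_. 1) (x + (0,-1)) else 0)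
      \<le> 1 - (1/4)^Suc n"
    using Suc.IH[of "x + (0,-1)"] Suc.prems power_le_one[of "1/4::real" "Suc n"] by (cases x) auto
  have "(killed_step D ^^ Suc (Suc n)) (\<lambda>_. 1) x = killed_step D ((killed_step D ^^ Suc n) (\<lambda>_. 1)) x"
    by simp
  also have "\<dots> \<le> (3 + (1 - (1/4)^Suc n)) / 4"
    using killed_step_le_down[of D "(killed_step D ^^ Suc n) (\<lambda>_. 1)" x] down killed_steps_le_one
    by (smt (verit, best) divide_right_mono)
  also have "\<dots> = 1 - (1/4)^Suc (Suc n)" by simp
  finally show ?case .
qed

lemma killed_steps_strip_decay:
  assumes D: "\<And>y. y \<in> D \<Longrightarrow> 1 \<le> snd y \<and> snd y \<le> int L" and x: "x \<in> D"
  shows "(killed_step D ^^ (k * Suc L)) (\<lambda>_. 1) x \<le> (1 - (1/4)^Suc L)^k"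
  using x
proof (induction k arbitrary: x)
  case (Suc k)
  define q :: real where "q = 1 - (1/4)^Suc L"
  have q0: "0 \<le> q" using power_le_one[of "1/4::real" "Suc L"] by (simp add: q_def)
  have "(killed_step D ^^ (Suc k * Suc L)) (\<lambda>_. 1) x
      = (killed_step D ^^ Suc L) ((killed_step D ^^ (k * Suc L)) (\<lambda>_. 1)) x"
    by (simp only: mult_Suc funpow_add comp_def)
  also have "\<dots> \<le> (killed_step D ^^ Suc L) (\<lambda>y. q^k * 1 + 0 * 1) x"
    using Suc by (intro killed_steps_mono) (auto simp: q_def)
  also have "\<dots> = q^k * (killed_step D ^^ Suc L) (\<lambda>_. 1) x"
    by (subst killed_steps_linear) simp
  also have "\<dots> \<le> q^k * q"
    using killed_steps_exit_below[of D x L] D Suc.prems q0 power_le_one[of "1/4::real" L]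
    by (simp add: q_def mult_left_mono)
  finally show ?case by (simp add: q_def mult.commute)
qed simp

text \<open>Optional stopping: in a bounded strip the killed walk dies at a geometric rate, so the term
  (killed_step D ^^ M) f u of the telescoped subsolution inequality becomes negligible.\<close>
lemma killed_steps_sum_ge_of_subsolution:
  assumes strip: "\<And>y. y \<in> D \<Longrightarrow> 1 \<le> snd y \<and> snd y \<le> int L"
    and step: "\<And>y. y \<in> D \<Longrightarrow> f y - c * g y \<le> killed_step D f y"
    and bound: "\<And>y. y \<in> D \<Longrightarrow> f y \<le> b" and b: "0 \<le> b"
    and u: "u \<in> D" and \<epsilon>: "0 < \<epsilon>"
  shows "\<exists>M. f u - \<epsilon> \<le> c * (\<Sum>n<M. (killed_step D ^^ n) g u)"
proof -
  define q :: real where "q = 1 - (1/4)^Suc L"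
  obtain k where k: "q ^ k < \<epsilon> / (b + 1)"
    using real_arch_pow_inv[of "\<epsilon> / (b + 1)" q] \<epsilon> b by (auto simp: q_def)
  define M where "M = k * Suc L"
  have "(killed_step D ^^ M) f u \<le> (killed_step D ^^ M) (\<lambda>y. b * 1 + 0 * 1) u"
    using bound u by (intro killed_steps_mono) auto
  also have "\<dots> = b * (killed_step D ^^ M) (\<lambda>_. 1) u"
    by (subst killed_steps_linear) simp
  also have "\<dots> \<le> b * q ^ k"
    using killed_steps_strip_decay[OF strip u, of k] b by (simp add: M_def q_def mult_left_mono)
  also have "\<dots> \<le> (b + 1) * q ^ k"
    using power_le_one[of "1/4::real" "Suc L"] by (intro mult_right_mono) (auto simp: q_def)
  also have "\<dots> < \<epsilon>"
    using k b by (simp add: pos_less_divide_eq mult.commute)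
  finally show ?thesis
    using killed_steps_telescope_ge[OF step u, of M] by (intro exI[of _ M]) linarith
qed

section \<open>Path sums and time reversal\<close>

definition step_lists :: "nat \<Rightarrow> pt list set" where
  "step_lists n = {s. set s \<subseteq> SRW_steps \<and> length s = n}"

lemma step_lists_Suc: "step_lists (Suc n) = (\<lambda>(e, s). e # s) ` (SRW_steps \<times> step_lists n)"
  by (auto simp: step_lists_def length_Suc_conv image_iff)

lemma sum_step_lists_Suc:
  "(\<Sum>s\<in>step_lists (Suc n). F s) = (\<Sum>e\<in>SRW_steps. \<Sum>s\<in>step_lists n. F (e # s))"
proof -
  have "inj_on (\<lambda>(e, s). e # s) (SRW_steps \<times> step_lists n)" by (auto simp: inj_on_def)
  then have "(\<Sum>s\<in>step_lists (Suc n). F s) = (\<Sum>(e, s)\<in>SRW_steps \<times> step_lists n. F (e # s))"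
    unfolding step_lists_Suc by (subst sum.reindex) (auto simp: case_prod_unfold)
  then show ?thesis by (simp add: sum.cartesian_product)
qed

lemma walk_pos_0 [simp]: "walk_pos w s 0 = w"
  by (simp add: walk_pos_def)

lemma walk_pos_Cons [simp]: "walk_pos w (e # s) (Suc j) = walk_pos (w + e) s j"
  by (simp add: walk_pos_def add.assoc)

definition stay_prob :: "pt set \<Rightarrow> pt set \<Rightarrow> pt \<Rightarrow> nat \<Rightarrow> real" where
  "stay_prob D F w n = (\<Sum>s\<in>step_lists n.
     if (\<forall>j<n. walk_pos w s (Suc j) \<in> D) \<and> walk_pos w s n \<in> F then (1/4)^n else 0)"

lemma stay_prob_eq_killed_steps: "stay_prob D F w n = (killed_step D ^^ n) (indicator F) w"
proof (induction n arbitrary: w)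
  case 0
  have "step_lists 0 = {[]}" by (auto simp: step_lists_def)
  then show ?case by (simp add: stay_prob_def indicator_def)
next
  case (Suc n)
  have first_step: "(\<Sum>s\<in>step_lists n.
        if (\<forall>j<Suc n. walk_pos w (e # s) (Suc j) \<in> D) \<and> walk_pos w (e # s) (Suc n) \<in> F
        then (1/4)^Suc n else 0)
      = (if w + e \<in> D then stay_prob D F (w + e) n else 0) / 4" for e
    by (cases "w + e \<in> D") (auto simp: stay_prob_def All_less_Suc2 sum_divide_distrib intro: sum.cong)
  have "stay_prob D F w (Suc n) = (\<Sum>e\<in>SRW_steps. (if w + e \<in> D then stay_prob D F (w + e) n else 0) / 4)"
    by (simp only: stay_prob_def[of D F w] sum_step_lists_Suc first_step)
  also have "\<dots> = killed_step D ((killed_step D ^^ n) (indicator F)) w"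
    by (simp only: Suc.IH killed_step_def[of D "(killed_step D ^^ n) (indicator F)" w] sum_divide_distrib)
  finally show ?case by simp
qed

definition reverse_steps :: "pt list \<Rightarrow> pt list" where
  "reverse_steps s = rev (map uminus s)"

lemma reverse_steps_involution [simp]: "reverse_steps (reverse_steps s) = s"
  by (simp add: reverse_steps_def rev_map comp_def)

lemma reverse_steps_step_lists: "s \<in> step_lists n \<Longrightarrow> reverse_steps s \<in> step_lists n"
  by (force simp: reverse_steps_def step_lists_def SRW_steps_def)

lemma walk_pos_reverse_steps:
  assumes "length r = n" and "k \<le> n"
  shows "walk_pos (x + sum_list r) (reverse_steps r) k = walk_pos x r (n - k)"
proof -
  have "sum_list (map uminus xs) = - sum_list (xs :: pt list)" for xs
    using uminus_sum_list_map[of id xs] by (simp add: comp_def)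
  moreover have "take k (reverse_steps r) = rev (map uminus (drop (n - k) r))"
    using assms by (simp add: reverse_steps_def take_rev drop_map)
  moreover have "sum_list r = sum_list (take (n - k) r) + sum_list (drop (n - k) r)"
    by (metis append_take_drop_id sum_list_append)
  ultimately show ?thesis by (simp add: walk_pos_def algebra_simps)
qed

lemma all_less_diff_iff_all_less_Suc: "(\<forall>k<n. Q (n - k)) \<longleftrightarrow> (\<forall>j<n. Q (Suc j))"
proof
  assume Q: "\<forall>k<n. Q (n - k)"
  show "\<forall>j<n. Q (Suc j)"
  proof (intro allI impI)
    fix j assume "j < n"
    then show "Q (Suc j)" using Q[rule_format, of "n - Suc j"] by (simp add: Suc_diff_Suc)
  qed
next
  assume Q: "\<forall>j<n. Q (Suc j)"
  show "\<forall>k<n. Q (n - k)"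
  proof (intro allI impI)
    fix k assume "k < n"
    then show "Q (n - k)" using Q[rule_format, of "n - Suc k"] by (simp add: Suc_diff_Suc)
  qed
qed

definition hit_prob_at :: "pt set \<Rightarrow> pt \<Rightarrow> pt \<Rightarrow> nat \<Rightarrow> real" where
  "hit_prob_at A z x n = (\<Sum>s\<in>step_lists n.
     if walk_pos z s n = x \<and> walk_pos z s n \<in> A \<and> (\<forall>k<n. walk_pos z s k \<notin> A) then (1/4) ^ n else 0)"

lemma hit_prob_eq_suminf: "hit_prob A z x = (\<Sum>n. hit_prob_at A z x n)"
  unfolding hit_prob_def hit_prob_at_def step_lists_def ..

lemma hit_prob_at_nonneg: "0 \<le> hit_prob_at A z x n"
  unfolding hit_prob_at_def by (intro sum_nonneg) auto

text \<open>Time reversal: a path from some z \<in> F that first hits A at x, read backwards, is a path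
  from x that avoids A at positive times and ends in F.\<close>
lemma sum_hit_prob_at_eq_stay_prob:
  assumes F: "finite F" and FA: "F \<inter> A = {}" and x: "x \<in> A"
  shows "(\<Sum>z\<in>F. hit_prob_at A z x n) = stay_prob (- A) F x n"
proof -
  define P where "P z s = (if walk_pos z s n = x \<and> walk_pos z s n \<in> A \<and> (\<forall>k<n. walk_pos z s k \<notin> A)
    then (1/4::real) ^ n else 0)" for z s
  have "(\<Sum>z\<in>F. hit_prob_at A z x n) = (\<Sum>z\<in>F. \<Sum>r\<in>step_lists n. P z (reverse_steps r))"
    unfolding hit_prob_at_def P_def[symmetric]
    by (intro sum.cong refl sum.reindex_bij_witness[of _ reverse_steps reverse_steps])
      (auto intro: reverse_steps_step_lists)
  also have "\<dots> = (\<Sum>r\<in>step_lists n. \<Sum>z\<in>F. P z (reverse_steps r))"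
    by (rule sum.swap)
  also have "\<dots> = stay_prob (- A) F x n"
    unfolding stay_prob_def
  proof (intro sum.cong refl)
    fix r assume "r \<in> step_lists n"
    then have len: "length r = n" by (simp add: step_lists_def)
    define z0 where "z0 = x + sum_list r"
    have ends: "walk_pos z (reverse_steps r) n = z - sum_list r" for z
      using walk_pos_reverse_steps[OF len, of n "z - sum_list r"] by simp
    have "P z (reverse_steps r) = 0" if "z \<noteq> z0" for z
      using that by (auto simp: P_def ends z0_def)
    then have "(\<Sum>z\<in>F. P z (reverse_steps r)) = (\<Sum>z\<in>F. if z = z0 then P z0 (reverse_steps r) else 0)"
      by (intro sum.cong) auto
    also have "\<dots> = (if z0 \<in> F then P z0 (reverse_steps r) else 0)"
      using F by simp
    also have "\<dots> = (if (\<forall>j<n. walk_pos x r (Suc j) \<in> - A) \<and> walk_pos x r n \<in> F then (1/4)^n else 0)"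
    proof -
      have "walk_pos x r n = z0" using len by (simp add: walk_pos_def z0_def)
      moreover have "(\<forall>k<n. walk_pos z0 (reverse_steps r) k \<notin> A) \<longleftrightarrow> (\<forall>j<n. walk_pos x r (Suc j) \<notin> A)"
        using walk_pos_reverse_steps[OF len, of _ x]
          all_less_diff_iff_all_less_Suc[of n "\<lambda>i. walk_pos x r i \<notin> A"]
        by (simp add: z0_def)
      ultimately show ?thesis
        using FA x walk_pos_reverse_steps[OF len, of n x] by (auto simp: P_def z0_def)
    qed
    finally show "(\<Sum>z\<in>F. P z (reverse_steps r))
      = (if (\<forall>j<n. walk_pos x r (Suc j) \<in> - A) \<and> walk_pos x r n \<in> F then (1/4)^n else 0)" .
  qed
  finally show ?thesis .
qed

section \<open>Expected visits to L_N and the harmonic measure\<close>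

definition clamped_height :: "nat \<Rightarrow> pt \<Rightarrow> real" where
  "clamped_height N y = max 0 (min (real_of_int (snd y)) (real N))"

lemma clamped_height_superharmonic:
  assumes "snd y \<noteq> 0"
  shows "killed_step D (clamped_height N) y \<le> clamped_height N y - indicator (line (int N)) y / 4"
proof -
  obtain a b where y: "y = (a, b)" by fastforce
  have vertical: "clamped_height N (y + (0,1)) + clamped_height N (y + (0,-1))
      \<le> 2 * clamped_height N y - indicator (line (int N)) y"
  proof -
    consider "b < 0" | "0 < b \<and> b < int N" | "b = int N" | "int N < b"
      using assms y by fastforce
    then show ?thesis
      by cases (use assms in \<open>simp_all add: clamped_height_def y line_def\<close>)
  qed
  have "killed_step D (clamped_height N) y \<le> (\<Sum>e\<in>SRW_steps. clamped_height N (y + e)) / 4"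
    by (rule killed_step_le_average) (simp add: clamped_height_def)
  also have "\<dots> = (2 * clamped_height N y + clamped_height N (y + (0,1)) + clamped_height N (y + (0,-1))) / 4"
    by (simp add: sum_SRW_steps clamped_height_def)
  also have "\<dots> \<le> clamped_height N y - indicator (line (int N)) y / 4"
    using vertical by simp
  finally show ?thesis .
qed

lemma killed_steps_line_visits_le:
  assumes "line 0 \<subseteq> A" and "snd x \<noteq> int N"
  shows "(\<Sum>n<M. (killed_step (- A) ^^ n) (indicator (line (int N))) x) \<le> 4 * real N"
proof -
  define K where "K = killed_step (- A)"
  define ch :: "pt \<Rightarrow> real" where "ch = indicator (line (int N))"
  have inside: "(\<Sum>n<M. (K ^^ n) ch y) \<le> 4 * real N" if y: "y \<in> - A" for y M
  proof -
    have "(K ^^ M) (clamped_height N) y \<le> clamped_height N y - 1/4 * (\<Sum>n<M. (K ^^ n) ch y)"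
      unfolding K_def ch_def
    proof (rule killed_steps_telescope_le[OF _ y])
      fix z assume "z \<in> - A"
      then have "snd z \<noteq> 0" using assms(1) by (auto simp: line_def)
      then show "killed_step (- A) (clamped_height N) z
          \<le> clamped_height N z - 1/4 * indicator (line (int N)) z"
        using clamped_height_superharmonic by simp
    qed
    moreover have "0 \<le> (K ^^ M) (clamped_height N) y"
      unfolding K_def by (rule killed_steps_nonneg) (simp_all add: clamped_height_def)
    moreover have "clamped_height N y \<le> real N" by (simp add: clamped_height_def)
    ultimately show ?thesis by linarith
  qed
  show ?thesis
  proof (cases M)
    case (Suc M')
    have "(\<Sum>n<M. (K ^^ n) ch x) = ch x + (\<Sum>n<M'. K ((K ^^ n) ch) x)"
      by (simp add: Suc sum.lessThan_Suc_shift del: sum.lessThan_Suc)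
    also have "\<dots> = K (\<lambda>y. \<Sum>n<M'. (K ^^ n) ch y) x"
      using assms(2) by (simp add: ch_def line_def K_def killed_step_sum)
    also have "\<dots> \<le> K (\<lambda>_. 4 * real N) x"
      unfolding K_def by (rule killed_step_mono) (use inside in \<open>simp add: K_def\<close>)
    also have "\<dots> \<le> 4 * real N"
      unfolding K_def by (rule killed_step_const_le) simp
    finally show ?thesis by (simp add: K_def ch_def)
  qed simp
qed

lemma sum_hit_prob_at_le:
  assumes x: "x \<in> A" and N: "0 < N" and xN: "snd x \<noteq> int N"
    and G: "finite G" "G \<subseteq> line (int N) - A"
  shows "(\<Sum>n<M. \<Sum>z\<in>G. hit_prob_at (A \<union> line 0) z x n) \<le> 4 * real N"
proof -
  have "G \<inter> (A \<union> line 0) = {}" using G(2) N by (auto simp: line_def)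
  then have "(\<Sum>n<M. \<Sum>z\<in>G. hit_prob_at (A \<union> line 0) z x n)
      = (\<Sum>n<M. (killed_step (- (A \<union> line 0)) ^^ n) (indicator G) x)"
    using x G(1) by (simp add: sum_hit_prob_at_eq_stay_prob stay_prob_eq_killed_steps)
  also have "\<dots> \<le> (\<Sum>n<M. (killed_step (- (A \<union> line 0)) ^^ n) (indicator (line (int N))) x)"
    using G(2) by (intro sum_mono killed_steps_mono) (auto simp: indicator_def)
  also have "\<dots> \<le> 4 * real N"
    using xN by (intro killed_steps_line_visits_le) auto
  finally show ?thesis .
qed

lemma hit_prob_summable_on_line:
  assumes x: "x \<in> A" and N: "0 < N" and xN: "snd x \<noteq> int N"
  shows "z \<in> line (int N) - A \<Longrightarrow> summable (hit_prob_at (A \<union> line 0) z x)"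
    and "(\<lambda>z. hit_prob (A \<union> line 0) z x) summable_on (line (int N) - A)"
proof -
  show summable: "summable (hit_prob_at (A \<union> line 0) z x)" if "z \<in> line (int N) - A" for z
    using sum_hit_prob_at_le[OF x N xN, of "{z}"] that
    by (intro summableI_nonneg_bounded[where x = "4 * real N"] hit_prob_at_nonneg) auto
  show "(\<lambda>z. hit_prob (A \<union> line 0) z x) summable_on (line (int N) - A)"
  proof (rule nonneg_bdd_above_summable_on)
    show "0 \<le> hit_prob (A \<union> line 0) z x" if "z \<in> line (int N) - A" for z
      unfolding hit_prob_eq_suminf using summable[OF that] by (intro suminf_nonneg hit_prob_at_nonneg)
    show "bdd_above (sum (\<lambda>z. hit_prob (A \<union> line 0) z x) ` {G. G \<subseteq> line (int N) - A \<and> finite G})"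
    proof (rule bdd_aboveI)
      fix y assume "y \<in> sum (\<lambda>z. hit_prob (A \<union> line 0) z x) ` {G. G \<subseteq> line (int N) - A \<and> finite G}"
      then obtain G where G: "G \<subseteq> line (int N) - A" "finite G" "y = (\<Sum>z\<in>G. hit_prob (A \<union> line 0) z x)"
        by auto
      have "y = (\<Sum>n. \<Sum>z\<in>G. hit_prob_at (A \<union> line 0) z x n)"
        unfolding G(3) hit_prob_eq_suminf using G summable by (subst suminf_sum) auto
      also have "\<dots> \<le> 4 * real N"
        using G summable sum_hit_prob_at_le[OF x N xN G(2,1)]
        by (intro suminf_le_const summable_sum) auto
      finally show "y \<le> 4 * real N" .
    qed
  qed
qed

lemma Hbar_ge_killed_steps:
  assumes x: "x \<in> A" and N: "0 < N" and xN: "snd x \<noteq> int N"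
  shows "(\<Sum>n<M. (killed_step (- (A \<union> line 0)) ^^ n)
            (indicator ((line (int N) - A) \<inter> {z. \<bar>fst z\<bar> \<le> W})) x) \<le> Hbar A N x"
proof -
  define F where "F = (line (int N) - A) \<inter> {z. \<bar>fst z\<bar> \<le> W}"
  have "F \<subseteq> (\<lambda>i. (i, int N)) ` {- W .. W}"
    by (auto simp: F_def line_def image_iff)
  then have F: "finite F" by (rule finite_subset) simp
  have "F \<inter> (A \<union> line 0) = {}" using N by (auto simp: F_def line_def)
  then have "(\<Sum>n<M. (killed_step (- (A \<union> line 0)) ^^ n) (indicator F) x)
      = (\<Sum>n<M. \<Sum>z\<in>F. hit_prob_at (A \<union> line 0) z x n)"
    using x F by (simp add: sum_hit_prob_at_eq_stay_prob stay_prob_eq_killed_steps)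
  also have "\<dots> = (\<Sum>z\<in>F. \<Sum>n<M. hit_prob_at (A \<union> line 0) z x n)"
    by (rule sum.swap)
  also have "\<dots> \<le> (\<Sum>z\<in>F. hit_prob (A \<union> line 0) z x)"
    unfolding hit_prob_eq_suminf using hit_prob_summable_on_line(1)[OF x N xN]
    by (intro sum_mono sum_le_suminf) (auto simp: F_def hit_prob_at_nonneg)
  also have "\<dots> = (\<Sum>\<^sub>\<infinity>z\<in>F. hit_prob (A \<union> line 0) z x)"
    using F by simp
  also have "\<dots> \<le> Hbar A N x"
    unfolding Hbar_def using F hit_prob_summable_on_line[OF x N xN]
    by (intro infsum_mono_neutral)
      (auto simp: F_def hit_prob_eq_suminf hit_prob_at_nonneg intro!: suminf_nonneg)
  finally show ?thesis unfolding F_def .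
qed

lemma Hbar_nonneg:
  assumes "x \<in> A" and "0 < N" and "snd x \<noteq> int N"
  shows "0 \<le> Hbar A N x"
  using Hbar_ge_killed_steps[OF assms, where M = 0] by simp

lemma sum_shift_le:
  fixes g :: "nat \<Rightarrow> real"
  assumes "\<And>n. 0 \<le> g n"
  shows "(\<Sum>n<M. g (n + j)) \<le> (\<Sum>n<M + j. g n)"
proof -
  have "(\<Sum>n<M. g (n + j)) = (\<Sum>n\<in>{j..<M + j}. g n)"
    using sum.shift_bounds_nat_ivl[of g 0 j M] by (simp add: lessThan_atLeast0 add.commute)
  also have "\<dots> \<le> (\<Sum>n<M + j. g n)"
    using assms by (intro sum_mono2) auto
  finally show ?thesis .
qed

text \<open>The factor (1/4)^j pays for the straight climb from x to x + (0, j).\<close>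
lemma Hbar_ge_via_region:
  assumes x: "x \<in> A" and N: "0 < N" and xN: "snd x \<noteq> int N"
    and D: "D \<subseteq> - (A \<union> line 0)"
    and path: "\<And>i. 1 \<le> i \<Longrightarrow> i \<le> j \<Longrightarrow> x + (0, int i) \<in> D"
    and visits: "1 \<le> (\<Sum>n<M. (killed_step D ^^ n) (indicator (line (int N))) (x + (0, int j)))"
  shows "(1/4)^j \<le> Hbar A N x"
proof -
  define ch :: "pt \<Rightarrow> real" where "ch = indicator (line (int N))"
  define W where "W = \<bar>fst x\<bar> + int (M + j)"
  define F where "F = (line (int N) - A) \<inter> {z. \<bar>fst z\<bar> \<le> W}"
  have ch_nonneg: "0 \<le> (killed_step D ^^ n) ch y" for n y
    unfolding ch_def by (rule killed_steps_nonneg) auto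
  have "(1/4)^j \<le> (\<Sum>n<M. (1/4)^j * (killed_step D ^^ n) ch (x + (0, int j)))"
    using visits by (simp add: sum_distrib_left[symmetric] ch_def)
  also have "\<dots> \<le> (\<Sum>n<M. (killed_step D ^^ j) ((killed_step D ^^ n) ch) x)"
    using path ch_nonneg by (intro sum_mono killed_steps_ge_vertical_path) auto
  also have "\<dots> = (\<Sum>n<M. (killed_step D ^^ (n + j)) ch x)"
    by (simp only: add.commute[of _ j] funpow_add comp_def)
  also have "\<dots> \<le> (\<Sum>n<M + j. (killed_step D ^^ n) ch x)"
    using ch_nonneg by (rule sum_shift_le)
  also have "\<dots> = (\<Sum>n<M + j. (killed_step D ^^ n) (indicator F) x)"
  proof (intro sum.cong refl killed_steps_local)
    fix n y assume n: "n \<in> {..<M + j}" and y: "y \<in> insert x D" and "l1_dist x y \<le> int n"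
    then have "\<bar>fst y\<bar> \<le> W" by (auto simp: l1_dist_def W_def)
    then show "ch y = indicator F y"
      using y x xN D by (auto simp: ch_def F_def indicator_def line_def)
  qed
  also have "\<dots> \<le> (\<Sum>n<M + j. (killed_step (- (A \<union> line 0)) ^^ n) (indicator F) x)"
    using D by (intro sum_mono killed_steps_mono_domain) auto
  also have "\<dots> \<le> Hbar A N x"
    unfolding F_def by (rule Hbar_ge_killed_steps[OF x N xN])
  finally show ?thesis .
qed

section \<open>A superharmonic barrier\<close>

definition powr_deriv :: "real \<Rightarrow> nat \<Rightarrow> complex \<Rightarrow> complex" where
  "powr_deriv \<beta> i z = of_real (\<Prod>k<i. (\<beta> - real k)) * z powr (of_real (\<beta> - real i))"

lemma has_field_derivative_powr_deriv:
  assumes "0 < Re z"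
  shows "(powr_deriv \<beta> i has_field_derivative powr_deriv \<beta> (Suc i) z) (at z)"
proof -
  have "z \<notin> \<real>\<^sub>\<le>\<^sub>0" using assms by (auto simp: complex_nonpos_Reals_iff)
  then have "((\<lambda>z. z powr (of_real (\<beta> - real i))) has_field_derivative
      (of_real (\<beta> - real i) * z powr (of_real (\<beta> - real i) - 1))) (at z)"
    by (rule has_field_derivative_powr)
  then have "(powr_deriv \<beta> i has_field_derivative of_real (\<Prod>k<i. (\<beta> - real k)) *
      (of_real (\<beta> - real i) * z powr (of_real (\<beta> - real i) - 1))) (at z)"
    unfolding powr_deriv_def by (rule DERIV_cmult)
  then show ?thesis by (simp add: powr_deriv_def algebra_simps)
qed

lemma norm_powr_deriv_4_le:
  assumes "0 < \<beta>" and "\<beta> < 1" and "1 \<le> r" and "r \<le> Re z"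
  shows "cmod (powr_deriv \<beta> 4 z) \<le> 6 / r^3"
proof -
  have z: "r \<le> cmod z" using assms complex_Re_le_cmod[of z] by linarith
  have "\<bar>\<Prod>k<4. (\<beta> - real k)\<bar> = \<bar>\<beta>\<bar> * \<bar>\<beta> - 1\<bar> * \<bar>\<beta> - 2\<bar> * \<bar>\<beta> - 3\<bar>"
    by (simp add: lessThan_nat_numeral abs_mult eval_nat_numeral)
  also have "\<dots> \<le> 1 * 1 * 2 * 3"
    using assms by (intro mult_mono) auto
  finally have coeff: "\<bar>\<Prod>k<4. (\<beta> - real k)\<bar> \<le> 6" by simp
  have "cmod (z powr (of_real (\<beta> - 4))) = cmod z powr (\<beta> - 4)"
    by (subst norm_powr_real_powr') auto
  also have "\<dots> \<le> cmod z powr (-3)"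
    using z assms by (intro powr_mono) auto
  also have "\<dots> = 1 / cmod z ^ 3"
    using z assms by (simp add: powr_minus_divide powr_realpow)
  also have "\<dots> \<le> 1 / r^3"
    using z assms by (intro divide_left_mono power_mono mult_pos_pos zero_less_power) auto
  finally have "cmod (z powr (of_real (\<beta> - 4))) \<le> 1 / r^3" .
  with coeff have "\<bar>\<Prod>k<4. (\<beta> - real k)\<bar> * cmod (z powr (of_real (\<beta> - 4))) \<le> 6 * (1 / r^3)"
    by (intro mult_mono) auto
  moreover have "cmod (powr_deriv \<beta> 4 z)
      = \<bar>\<Prod>k<4. (\<beta> - real k)\<bar> * cmod (z powr (of_real (\<beta> - 4)))"
    by (simp only: powr_deriv_def norm_mult norm_of_real of_nat_numeral)
  ultimately show ?thesis by simp
qed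

text \<open>In the third order Taylor expansions at W \<plusminus> 1 and W \<plusminus> i the odd order terms cancel in pairs,
  and the second order ones since 1 + 1 + i^2 + (-i)^2 = 0.\<close>
lemma powr_discrete_laplacian_le:
  fixes W :: complex and \<beta> :: real
  assumes \<beta>: "0 < \<beta>" "\<beta> < 1" and W: "3 \<le> Re W"
  shows "cmod ((W + 1) powr \<beta> + (W - 1) powr \<beta> + (W + \<i>) powr \<beta> + (W - \<i>) powr \<beta> - 4 * W powr \<beta>)
     \<le> 4 / (Re W - 1)^3"
proof -
  define B where "B = 6 / (Re W - 1)^3"
  define T where "T h = (\<Sum>i\<le>3. powr_deriv \<beta> i W * h ^ i / fact i)" for h
  have Re_ball: "Re W - 1 \<le> Re z" if "z \<in> cball W 1" for z
    using that abs_Re_le_cmod[of "W - z"] by (simp add: dist_norm)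
  have taylor: "cmod (powr_deriv \<beta> 0 (W + h) - T h) \<le> B / 6" if "cmod h = 1" for h
  proof -
    have "cmod (powr_deriv \<beta> 0 (W + h) - T ((W + h) - W)) \<le> B * cmod ((W + h) - W) ^ Suc 3 / fact 3"
      unfolding T_def
    proof (rule complex_Taylor[of "cball W 1"])
      show "(powr_deriv \<beta> i has_field_derivative powr_deriv \<beta> (Suc i) x) (at x within cball W 1)"
        if "x \<in> cball W 1" for i x
        using has_field_derivative_powr_deriv[of x \<beta> i] Re_ball[OF that] W
        by (auto intro: has_field_derivative_at_within)
      show "cmod (powr_deriv \<beta> (Suc 3) x) \<le> B" if "x \<in> cball W 1" for x
        using norm_powr_deriv_4_le[OF \<beta>, of "Re W - 1" x] Re_ball[OF that] W
        by (simp add: B_def numeral_eq_Suc)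
    qed (use that in \<open>auto simp: dist_norm\<close>)
    then show ?thesis using that by (simp add: fact_numeral)
  qed
  have "T 1 + T (-1) + T \<i> + T (-\<i>) = 4 * powr_deriv \<beta> 0 W"
    by (simp add: T_def eval_nat_numeral atMost_Suc algebra_simps)
  then have "(W + 1) powr \<beta> + (W - 1) powr \<beta> + (W + \<i>) powr \<beta> + (W - \<i>) powr \<beta> - 4 * W powr \<beta>
     = (powr_deriv \<beta> 0 (W + 1) - T 1) + (powr_deriv \<beta> 0 (W + (-1)) - T (-1))
     + (powr_deriv \<beta> 0 (W + \<i>) - T \<i>) + (powr_deriv \<beta> 0 (W + (-\<i>)) - T (-\<i>))"
    by (simp add: powr_deriv_def algebra_simps)
  also have "cmod \<dots> \<le> B/6 + B/6 + B/6 + B/6"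
    using taylor[of 1] taylor[of "-1"] taylor[of \<i>] taylor[of "-\<i>"]
    by (intro norm_triangle_le add_mono) auto
  finally show ?thesis by (simp add: B_def)
qed

lemma Re_powr_ge_cos:
  fixes z :: complex
  assumes z: "0 < Re z" and \<beta>: "0 < \<beta>" "\<beta> < 1"
  shows "cmod z powr \<beta> * cos (\<beta> * pi / 2) \<le> Re (z powr complex_of_real \<beta>)"
proof -
  have z0: "z \<noteq> 0" using z by auto
  have "\<beta> * \<bar>Im (Ln z)\<bar> \<le> \<beta> * (pi / 2)"
    using Re_Ln_pos_lt_imp[OF z] \<beta> by (intro mult_left_mono) auto
  then have "cos (\<beta> * pi / 2) \<le> cos \<bar>\<beta> * Im (Ln z)\<bar>"
    using \<beta> by (intro cos_monotone_0_pi_le) (auto simp: abs_mult field_simps)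
  then have "cmod z powr \<beta> * cos (\<beta> * pi / 2) \<le> cmod z powr \<beta> * cos (\<beta> * Im (Ln z))"
    by (intro mult_left_mono) auto
  also have "\<dots> = Re (z powr complex_of_real \<beta>)"
    using z0 by (simp add: powr_def Re_exp Re_Ln exp_of_real mult.commute)
  finally show ?thesis .
qed

lemma cube_le_reciprocal_second_difference:
  fixes t :: real
  assumes "3 \<le> t"
  shows "4 / (t - 1)^3 \<le> 16 * (1 / (t + 1) + 1 / (t - 1) - 2 / t)"
proof -
  have "(t/2)^3 \<le> (t - 1)^3" using assms by (intro power_mono) auto
  then have "4 / (t - 1)^3 \<le> 4 / (t/2)^3" using assms by (intro divide_left_mono) auto
  also have "\<dots> = 16 * (2 / (t * t * t))" by (simp add: power3_eq_cube)
  also have "\<dots> \<le> 16 * (2 / (t * (t - 1) * (t + 1)))"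
    using assms mult_mono[of 3 t 3 t] by (intro mult_left_mono divide_left_mono) (auto simp: algebra_simps)
  also have "2 / (t * (t - 1) * (t + 1)) = 1 / (t + 1) + 1 / (t - 1) - 2 / t"
  proof -
    have "1 / (t + 1) + 1 / (t - 1) - 2 / t
        = (t * (t - 1) + t * (t + 1) - 2 * (t - 1) * (t + 1)) / (t * (t - 1) * (t + 1))"
      using assms by (simp add: divide_simps) (simp add: algebra_simps)
    also have "t * (t - 1) + t * (t + 1) - 2 * (t - 1) * (t + 1) = 2"
      by (simp add: algebra_simps)
    finally show ?thesis by simp
  qed
  finally show ?thesis .
qed

lemma exists_nat_dominating_powr:
  fixes C S :: real and h :: nat
  assumes \<beta>: "0 < \<beta>" "\<beta> < 1" and C: "0 \<le> C" and S: "0 \<le> S"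
  shows "\<exists>m::nat. h < m \<and> C * (real m + S) powr \<beta> + real h + 1 \<le> real m"
proof -
  define y where "y = max (max S (2 * (real h + 1))) ((4 * C + 1) powr (1 / (1 - \<beta>)))"
  define m where "m = nat \<lceil>y\<rceil> + 1"
  have "y \<le> real m" using real_nat_ceiling_ge[of y] by (simp add: m_def)
  then have m_S: "S \<le> real m" and m_h: "2 * (real h + 1) \<le> real m"
    and m_C: "(4 * C + 1) powr (1 / (1 - \<beta>)) \<le> real m"
    by (auto simp: y_def)
  have m: "1 \<le> real m" by (simp add: m_def)
  define Q where "Q = C * real m powr \<beta>"
  have "4 * C + 1 = ((4 * C + 1) powr (1 / (1 - \<beta>))) powr (1 - \<beta>)"
    using \<beta> C by (simp add: powr_powr)
  also have "\<dots> \<le> real m powr (1 - \<beta>)"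
    using m_C \<beta> by (intro powr_mono2) auto
  finally have pow: "4 * C + 1 \<le> real m powr (1 - \<beta>)" .
  have "4 * (C * real m powr \<beta>) \<le> (4 * C + 1) * real m powr \<beta>"
    by (simp add: algebra_simps)
  also have "\<dots> \<le> real m powr (1 - \<beta>) * real m powr \<beta>"
    using pow by (rule mult_right_mono) simp
  also have "\<dots> = real m" using m by (simp add: powr_add[symmetric])
  finally have bound: "4 * Q \<le> real m" by (simp add: Q_def)
  have "(real m + S) powr \<beta> \<le> (2 * real m) powr \<beta>"
    using m_S S \<beta> by (intro powr_mono2) auto
  also have "\<dots> = 2 powr \<beta> * real m powr \<beta>" by (simp add: powr_mult)
  also have "\<dots> \<le> 2 * real m powr \<beta>"
    using powr_mono[of \<beta> 1 2] \<beta> by (intro mult_right_mono) auto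
  finally have "C * (real m + S) powr \<beta> \<le> C * (2 * real m powr \<beta>)"
    using C by (rule mult_left_mono)
  then have "C * (real m + S) powr \<beta> \<le> 2 * Q" by (simp add: Q_def)
  moreover have "real h < real m" using m_h by auto
  ultimately show ?thesis using bound m_h by (intro exI[of _ m]) auto
qed

text \<open>The lattice point (x1, x2) is sent to (x2 + S) - i x1: the upper half plane becomes the half
  plane Re w \<ge> S, on which w powr \<beta> is holomorphic.\<close>
definition rotate_shift :: "real \<Rightarrow> pt \<Rightarrow> complex" where
  "rotate_shift S x = Complex (real_of_int (snd x) + S) (- real_of_int (fst x))"

locale barrier_params =
  fixes \<beta> C K S :: real
  assumes beta_pos: "0 < \<beta>" and beta_lt_one: "\<beta> < 1"
    and C_cos: "C * cos (\<beta> * pi / 2) = 2"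
    and K_ge: "16 * C \<le> K" and S_ge_K: "K \<le> S" and S_ge_3: "3 \<le> S"
begin

lemma C_nonneg: "0 \<le> C"
proof -
  have "0 < \<beta> * pi" "\<beta> * pi < pi" using beta_pos beta_lt_one by simp_all
  then have "0 < cos (\<beta> * pi / 2)" by (intro cos_gt_zero_pi) linarith+
  then show ?thesis using C_cos by (metis zero_le_mult_iff less_le zero_le_numeral not_less)
qed

lemma K_nonneg: "0 \<le> K"
  using C_nonneg K_ge by linarith

definition barrier :: "pt \<Rightarrow> real" where
  "barrier x = C * Re (rotate_shift S x powr complex_of_real \<beta>) - K / (real_of_int (snd x) + S)"

text \<open>Re(w^\<beta>) is harmonic, and the error of its discrete Laplacian, of order |w|^(\<beta>-4), is absorbed
  by the discrete Laplacian of -K/Re w.\<close>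
lemma barrier_superharmonic:
  assumes x: "0 \<le> snd x"
  shows "barrier (x + (1,0)) + barrier (x + (-1,0)) + barrier (x + (0,1)) + barrier (x + (0,-1))
    \<le> 4 * barrier x"
proof -
  obtain a b where x_eq: "x = (a, b)" by fastforce
  define t where "t = real_of_int b + S"
  define W where "W = rotate_shift S x"
  have t: "3 \<le> t" using x S_ge_3 by (simp add: t_def x_eq)
  have Re_W: "Re W = t" by (simp add: W_def rotate_shift_def t_def x_eq)
  have neighbours: "rotate_shift S (x + (1,0)) = W - \<i>" "rotate_shift S (x + (-1,0)) = W + \<i>"
     "rotate_shift S (x + (0,1)) = W + 1" "rotate_shift S (x + (0,-1)) = W - 1"
    by (simp_all add: W_def rotate_shift_def x_eq complex_eq_iff)
  have "Re ((W + 1) powr \<beta>) + Re ((W - 1) powr \<beta>) + Re ((W + \<i>) powr \<beta>) + Re ((W - \<i>) powr \<beta>)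
      - 4 * Re (W powr \<beta>) \<le> 4 / (t - 1)^3"
    using complex_Re_le_cmod[of "(W + 1) powr \<beta> + (W - 1) powr \<beta> + (W + \<i>) powr \<beta> + (W - \<i>) powr \<beta>
      - 4 * W powr \<beta>"] powr_discrete_laplacian_le[OF beta_pos beta_lt_one, of W] Re_W t
    by simp
  then have "C * (Re ((W + 1) powr \<beta>) + Re ((W - 1) powr \<beta>) + Re ((W + \<i>) powr \<beta>)
      + Re ((W - \<i>) powr \<beta>) - 4 * Re (W powr \<beta>)) \<le> C * (4 / (t - 1)^3)"
    using C_nonneg by (intro mult_left_mono) auto
  also have "\<dots> \<le> C * (16 * (1 / (t + 1) + 1 / (t - 1) - 2 / t))"
    using C_nonneg cube_le_reciprocal_second_difference[OF t] by (intro mult_left_mono) auto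
  also have "\<dots> \<le> K * (1 / (t + 1) + 1 / (t - 1) - 2 / t)"
  proof -
    have "0 < 4 / (t - 1)^3" using t by simp
    then have "0 \<le> 1 / (t + 1) + 1 / (t - 1) - 2 / t"
      using cube_le_reciprocal_second_difference[OF t] by (smt (verit))
    then have "16 * C * (1 / (t + 1) + 1 / (t - 1) - 2 / t) \<le> K * (1 / (t + 1) + 1 / (t - 1) - 2 / t)"
      by (rule mult_right_mono[OF K_ge])
    then show ?thesis by (simp only: mult.assoc mult.left_commute[of C 16])
  qed
  finally show ?thesis
    by (simp add: barrier_def neighbours flip: W_def) (simp add: x_eq t_def algebra_simps add_divide_distrib)
qed

lemma barrier_ge_norm_powr:
  assumes x: "0 \<le> snd x"
  shows "cmod (rotate_shift S x) powr \<beta> \<le> barrier x"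
proof -
  define W where "W = rotate_shift S x"
  define t where "t = real_of_int (snd x) + S"
  have Re_W: "Re W = t" and t: "S \<le> t" using x by (simp_all add: W_def rotate_shift_def t_def)
  have W: "1 \<le> cmod W" using complex_Re_le_cmod[of W] Re_W t S_ge_3 by linarith
  have "C * (cmod W powr \<beta> * cos (\<beta> * pi / 2)) \<le> C * Re (W powr complex_of_real \<beta>)"
    using Re_powr_ge_cos[of W \<beta>] Re_W t S_ge_3 beta_pos beta_lt_one C_nonneg by (intro mult_left_mono) auto
  moreover have "C * (cmod W powr \<beta> * cos (\<beta> * pi / 2)) = 2 * cmod W powr \<beta>"
    using C_cos by (simp add: algebra_simps)
  moreover have "1 \<le> cmod W powr \<beta>" using W beta_pos by (simp add: ge_one_powr_ge_zero)
  moreover have "K / t \<le> 1" using S_ge_K t S_ge_3 K_nonneg by (simp add: divide_le_eq)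
  ultimately show ?thesis by (simp add: barrier_def flip: W_def t_def)
qed

lemma barrier_nonneg: "0 \<le> snd x \<Longrightarrow> 0 \<le> barrier x"
  using barrier_ge_norm_powr by (meson order.trans powr_ge_zero)

lemma barrier_on_axis_le: "barrier (0, int m) \<le> C * (real m + S) powr \<beta>"
proof -
  have "Re (rotate_shift S (0, int m) powr complex_of_real \<beta>) \<le> (real m + S) powr \<beta>"
    using complex_Re_le_cmod[of "rotate_shift S (0, int m) powr complex_of_real \<beta>"] S_ge_3
    by (simp add: rotate_shift_def complex_of_real_def[symmetric] norm_powr_real_powr)
  then have "C * Re (rotate_shift S (0, int m) powr complex_of_real \<beta>) \<le> C * (real m + S) powr \<beta>"
    using C_nonneg by (rule mult_left_mono)
  moreover have "0 \<le> K / (real m + S)" using K_nonneg S_ge_3 by simp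
  ultimately show ?thesis by (simp add: barrier_def)
qed

end



section \<open>The region above the curve\<close>

definition tent :: "nat \<Rightarrow> int \<Rightarrow> real" where
  "tent N t = min (real_of_int t) (2 * real N - real_of_int t)"

lemma tent_second_difference:
  assumes "1 \<le> b" "b \<le> 2 * int N - 1"
  shows "2 * tent N b - 2 * indicator {int N} b \<le> tent N (b + 1) + tent N (b - 1)"
proof -
  consider "b < int N" | "b = int N" | "int N < b" by linarith
  then show ?thesis
    by cases (use assms in \<open>auto simp: tent_def indicator_def\<close>)
qed

definition region_above_curve :: "real \<Rightarrow> nat \<Rightarrow> nat \<Rightarrow> pt set" where
  "region_above_curve \<gamma> h N =
     {x. int h < snd x \<and> snd x < 2 * int N \<and> \<bar>real_of_int (fst x)\<bar> powr \<gamma> < real_of_int (snd x)}"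

context barrier_params
begin

definition potential :: "nat \<Rightarrow> nat \<Rightarrow> pt \<Rightarrow> real" where
  "potential h N y = tent N (snd y) - real h - barrier y"

lemma potential_nonpos_off_region:
  assumes \<gamma>: "\<gamma> \<le> \<beta>" and h: "h \<le> N"
    and x: "x \<in> region_above_curve \<gamma> h N" and e: "e \<in> SRW_steps"
    and y: "x + e \<notin> region_above_curve \<gamma> h N"
  shows "potential h N (x + e) \<le> 0"
proof -
  define y where "y = x + e"
  have "snd x - 1 \<le> snd y" "snd y \<le> snd x + 1"
    using e by (auto simp: y_def SRW_steps_def)
  moreover have "int h < snd x" "snd x < 2 * int N"
    using x by (auto simp: region_above_curve_def)
  ultimately have y0: "0 \<le> snd y" and tent_le: "tent N (snd y) \<le> real_of_int (snd y)"
    by (auto simp: tent_def)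
  consider "snd y = int h" | "snd y = 2 * int N"
    | "int h < snd y" "real_of_int (snd y) \<le> \<bar>real_of_int (fst y)\<bar> powr \<gamma>"
    using y \<open>snd x - 1 \<le> snd y\<close> \<open>snd y \<le> snd x + 1\<close> \<open>int h < snd x\<close> \<open>snd x < 2 * int N\<close>
    by (fastforce simp: region_above_curve_def y_def not_less)
  then show ?thesis
  proof cases
    case 1
    then show ?thesis using barrier_nonneg[OF y0] h by (simp add: potential_def tent_def y_def)
  next
    case 2
    then show ?thesis using barrier_nonneg[OF y0] by (simp add: potential_def tent_def y_def)
  next
    case 3
    then have "1 \<le> \<bar>real_of_int (fst y)\<bar>"
      by (cases "fst y = 0") auto
    moreover have "\<bar>real_of_int (fst y)\<bar> \<le> cmod (rotate_shift S y)"
      using abs_Im_le_cmod[of "rotate_shift S y"] by (simp add: rotate_shift_def)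
    ultimately have "real_of_int (snd y) \<le> cmod (rotate_shift S y) powr \<beta>"
      using 3 \<gamma> beta_pos
      by (meson order.trans powr_mono powr_mono2 less_imp_le zero_le_one abs_ge_zero)
    then show ?thesis
      using barrier_ge_norm_powr[OF y0] tent_le by (simp add: potential_def y_def)
  qed
qed

lemma potential_subsolution:
  assumes \<gamma>: "\<gamma> \<le> \<beta>" and h: "h \<le> N" and x: "x \<in> region_above_curve \<gamma> h N"
  shows "potential h N x - 1/2 * indicator (line (int N)) x
    \<le> killed_step (region_above_curve \<gamma> h N) (potential h N) x"
proof -
  obtain a b where x_eq: "x = (a, b)" by fastforce
  have b: "int h < b" "b < 2 * int N" using x by (auto simp: region_above_curve_def x_eq)
  have inside: "potential h N (x + e)
      \<le> (if x + e \<in> region_above_curve \<gamma> h N then potential h N (x + e) else 0)"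
    if "e \<in> SRW_steps" for e
    using potential_nonpos_off_region[OF \<gamma> h x that] by auto
  have "barrier (x + (1,0)) + barrier (x + (-1,0)) + barrier (x + (0,1)) + barrier (x + (0,-1))
      \<le> 4 * barrier x"
    using b by (intro barrier_superharmonic) (simp add: x_eq)
  moreover have "2 * tent N b - 2 * indicator {int N} b \<le> tent N (b + 1) + tent N (b - 1)"
    using b by (intro tent_second_difference) auto
  moreover have "indicator (line (int N)) x = (indicator {int N} b :: real)"
    by (simp add: x_eq line_def indicator_def)
  ultimately have "potential h N x - 1/2 * indicator (line (int N)) x
      \<le> (potential h N (x + (1,0)) + potential h N (x + (-1,0)) + potential h N (x + (0,1))
        + potential h N (x + (0,-1))) / 4"
    by (simp add: potential_def x_eq algebra_simps)
  also have "\<dots> \<le> killed_step (region_above_curve \<gamma> h N) (potential h N) x"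
    unfolding killed_step_expand using inside by (intro divide_right_mono add_mono) (auto simp: SRW_steps_def)
  finally show ?thesis .
qed

lemma expected_line_visits_ge_one:
  assumes \<gamma>: "\<gamma> \<le> \<beta>" and m: "h < m" "m \<le> N"
    and dominates: "C * (real m + S) powr \<beta> + real h + 1 \<le> real m"
  shows "\<exists>M. 1 \<le> (\<Sum>n<M. (killed_step (region_above_curve \<gamma> h N) ^^ n)
      (indicator (line (int N))) (0, int m))"
proof -
  define D where "D = region_above_curve \<gamma> h N"
  have u: "(0, int m) \<in> D"
    using m by (simp add: D_def region_above_curve_def)
  have potential_u: "1 \<le> potential h N (0, int m)"
    using dominates barrier_on_axis_le[of m] m by (simp add: potential_def tent_def)
  define visits where "visits M = (\<Sum>n<M. (killed_step D ^^ n) (indicator (line (int N))) (0, int m))"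
    for M
  have "\<exists>M. potential h N (0, int m) - 1/2 \<le> 1/2 * visits M"
    unfolding visits_def
  proof (rule killed_steps_sum_ge_of_subsolution)
    show "1 \<le> snd y \<and> snd y \<le> int (2 * N)" if "y \<in> D" for y
      using that by (auto simp: D_def region_above_curve_def)
    show "potential h N y - 1/2 * indicator (line (int N)) y \<le> killed_step D (potential h N) y"
      if "y \<in> D" for y
      using potential_subsolution[OF \<gamma> _ that[unfolded D_def]] m by (simp add: D_def)
    show "potential h N y \<le> real N" if "y \<in> D" for y
      using that barrier_nonneg[of y] by (auto simp: D_def region_above_curve_def potential_def tent_def)
  qed (use u in auto)
  then obtain M where "potential h N (0, int m) - 1/2 \<le> 1/2 * visits M" ..
  with potential_u have "1 \<le> visits M" by linarith
  then show ?thesis unfolding visits_def D_def by blast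
qed

end

lemma finite_lseg: "finite (lseg \<alpha> h)"
proof -
  have "lseg \<alpha> h = (\<lambda>i. (i, int h)) ` {- \<lfloor>real h powr \<alpha>\<rfloor> .. \<lfloor>real h powr \<alpha>\<rfloor>}"
    by (auto simp: lseg_def image_iff abs_le_iff)
  then show ?thesis by simp
qed

lemma mem_B_below_h0_or_curve:
  assumes "finite (Bhat \<alpha> B)" and "y \<in> B"
  shows "snd y \<le> int (h0 \<alpha> B) \<or> real_of_int (snd y) \<le> \<bar>real_of_int (fst y)\<bar> powr (1/\<alpha>)"
proof (cases "y \<in> Bhat \<alpha> B")
  case True
  then have "snd y \<le> Max (snd ` Bhat \<alpha> B)" using assms(1) by simp
  also have "\<dots> \<le> int (h0 \<alpha> B)" using True by (auto simp: h0_def)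
  finally show ?thesis ..
qed (use assms(2) in \<open>simp add: Bhat_def\<close>)

lemma region_above_curve_avoids_B:
  assumes "finite (Bhat \<alpha> B)"
  shows "region_above_curve (1/\<alpha>) (h0 \<alpha> B) N \<subseteq> - (B \<union> lseg \<alpha> (h0 \<alpha> B) \<union> line 0)"
  using mem_B_below_h0_or_curve[OF assms]
  by (fastforce simp: region_above_curve_def lseg_def line_def)

theorem lemma1:
  fixes \<alpha> :: real and B :: "(int \<times> int) set"
  assumes "\<alpha> > 1" and "B \<subseteq> UHP" and "B \<noteq> {}" and "finite (Bhat \<alpha> B)"
  shows "\<exists>c>0. \<exists>N0. \<forall>N\<ge>N0.
    (\<Sum>w\<in>lseg \<alpha> (h0 \<alpha> B). Hbar (B \<union> lseg \<alpha> (h0 \<alpha> B)) N w) \<ge> c"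
proof -
  define h where "h = h0 \<alpha> B"
  define \<beta> where "\<beta> = (1 + 1/\<alpha>) / 2"
  define C where "C = 2 / cos (\<beta> * pi / 2)"
  have \<beta>: "0 < \<beta>" "\<beta> < 1" "1/\<alpha> \<le> \<beta>"
    using assms(1) by (auto simp: \<beta>_def field_simps)
  then have "0 < \<beta> * pi" "\<beta> * pi < pi" by simp_all
  then have "0 < cos (\<beta> * pi / 2)" by (intro cos_gt_zero_pi) linarith+
  then interpret barrier_params \<beta> C "16 * C" "16 * C + 3"
    using \<beta> by unfold_locales (auto simp: C_def)
  obtain m where m: "h < m" "C * (real m + (16 * C + 3)) powr \<beta> + real h + 1 \<le> real m"
    using exists_nat_dominating_powr[OF beta_pos beta_lt_one C_nonneg, of "16 * C + 3" h] C_nonneg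
    by auto
  show ?thesis
  proof (intro exI conjI allI impI)
    fix N assume N: "m + 1 \<le> N"
    obtain M where "1 \<le> (\<Sum>n<M. (killed_step (region_above_curve (1/\<alpha>) h N) ^^ n)
        (indicator (line (int N))) (0, int m))"
      using expected_line_visits_ge_one[OF \<beta>(3) m(1) _ m(2), of N] N by auto
    then have "(1/4)^(m - h) \<le> Hbar (B \<union> lseg \<alpha> h) N (0, int h)"
      using m N region_above_curve_avoids_B[OF assms(4), of N]
      by (intro Hbar_ge_via_region[where D = "region_above_curve (1/\<alpha>) h N" and M = M])
        (auto simp: h_def lseg_def region_above_curve_def)
    also have "\<dots> \<le> (\<Sum>w\<in>lseg \<alpha> h. Hbar (B \<union> lseg \<alpha> h) N w)"
      using N m by (intro member_le_sum Hbar_nonneg finite_lseg) (auto simp: lseg_def)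
    finally show "(1/4)^(m - h) \<le> (\<Sum>w\<in>lseg \<alpha> (h0 \<alpha> B). Hbar (B \<union> lseg \<alpha> (h0 \<alpha> B)) N w)"
      by (simp add: h_def)
  qed simp
qed

end
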